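(* For any frame $L$, $\mathrm{F}(L)=\mathrm{C}(\mathrm{coS}(L))$ if and only if $\mathrm{coS}(L)$ is an extremally disconnected P-frame.
   Context: $\mathbb{Q}$ is the rationals. A sublocale of $L$ is a subset closed under arbitrary meets and such that $x\to s\in S$ for $x\in L$, $s\in S$; $\mathrm{coS}(L)$ is the frame of sublocales ordered by reverse inclusion, with pseudocomplement $^\ast$. The frame $\mathfrak{L}(\overline{\mathbb{IR}})$ is presented by generators $(r,\textsf{---})$, $(\textsf{---},s)$ ($r,s\in\mathbb{Q}$) with relations (r1) $(r,\textsf{---})\wedge(\textsf{---},s)=0$ for $r\ge s$; (r3) $(r,\textsf{---})=\bigvee_{s>r}(s,\textsf{---})$; (r4) $(\textsf{---},s)=\bigvee_{r<s}(\textsf{---},r)$. For a frame $M$, $\mathrm{C}(M)$ is the set of frame homomorphisms $f\colon\mathfrak{L}(\overline{\mathbb{IR}})\to M$ satisfying (r2) $f(r,\textsf{---})\vee f(\textsf{---},s)=1$ for $r<s$, (r5) $\bigvee_r f(r,\textsf{---})=1$, (r6) $\bigvee_s f(\textsf{---},s)=1$ (i.e. continuous real functions on $M$). $\overline{\mathrm{F}}(L)$ is the set of homomorphisms $f\colon\mathfrak{L}(\overline{\mathbb{IR}})\to\mathrm{coS}(L)$ with $f(r,\textsf{---})^\ast\le f(\textsf{---},s)$ and $f(\textsf{---},s)^\ast\le f(r,\textsf{---})$ for $r<s$, ordered by $f\le g$ iff $f(r,\textsf{---})\le g(r,\textsf{---})$ and $g(\textsf{---},s)\le f(\textsf{---},s)$;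 it is a complete lattice with top $\boldsymbol{+\infty}$ ($(r,\textsf{---})\mapsto1$, $(\textsf{---},s)\mapsto0$) and bottom $\boldsymbol{-\infty}$ ($(r,\textsf{---})\mapsto0$, $(\textsf{---},s)\mapsto1$). $\mathrm{F}(L)$ is the set of $f\in\overline{\mathrm{F}}(L)$ such that for all $g\in\overline{\mathrm{F}}(L)$, $f\vee g=\boldsymbol{+\infty}\Rightarrow g=\boldsymbol{+\infty}$ and $f\wedge g=\boldsymbol{-\infty}\Rightarrow g=\boldsymbol{-\infty}$; note $\mathrm{C}(\mathrm{coS}(L))\subseteq\overline{\mathrm{F}}(L)$. A frame $M$ is extremally disconnected if $a^\ast\vee a^{\ast\ast}=1$ for all $a$; an element $a\in M$ is a cozero if $a=f(\textsf{---},0)\vee f(0,\textsf{---})$ for some $f\in\mathrm{C}(M)$; $M$ is a P-frame if every cozero element is complemented. *)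

theory Defs
  imports Main "HOL.Rat"
begin

class frame = complete_lattice +
  assumes frame_inf_Sup: "inf x (Sup A) = (SUP a\<in>A. inf x a)"

definition fimp :: "'a::complete_lattice \<Rightarrow> 'a \<Rightarrow> 'a" where
  "fimp x s = Sup {y. inf y x \<le> s}"

definition is_sublocale :: "'a::complete_lattice set \<Rightarrow> bool" where
  "is_sublocale S \<longleftrightarrow> (\<forall>A. A \<subseteq> S \<longrightarrow> Inf A \<in> S) \<and> (\<forall>x. \<forall>s\<in>S. fimp x s \<in> S)"

lemma is_sublocale_UNIV: "is_sublocale UNIV"
  by (simp add: is_sublocale_def)

lemma is_sublocale_Inter: "(\<And>S. S \<in> F \<Longrightarrow> is_sublocale S) \<Longrightarrow> is_sublocale (\<Inter>F)"
  unfolding is_sublocale_def by blast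

definition sl_hull :: "'a::complete_lattice set \<Rightarrow> 'a set" where
  "sl_hull X = \<Inter>{S. is_sublocale S \<and> X \<subseteq> S}"

lemma is_sublocale_hull: "is_sublocale (sl_hull X)"
  unfolding sl_hull_def by (rule is_sublocale_Inter) auto

lemma hull_sub: "X \<subseteq> sl_hull X"
  unfolding sl_hull_def by auto

lemma hull_least: "is_sublocale S \<Longrightarrow> X \<subseteq> S \<Longrightarrow> sl_hull X \<subseteq> S"
  unfolding sl_hull_def by auto

text \<open>The type of sublocales of a frame; coS(L) orders them by reverse inclusion.\<close>
typedef (overloaded) 'a coS = "{S::'a::frame set. is_sublocale S}"
  morphisms Rep_coS Abs_coS
  using is_sublocale_UNIV by blast

lemma Rep_coS_sl: "is_sublocale (Rep_coS S)"
  using Rep_coS by auto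

lemma Rep_Abs_hull: "Rep_coS (Abs_coS (sl_hull X)) = sl_hull X"
  by (simp add: Abs_coS_inverse is_sublocale_hull)

lemma Rep_Abs_Inter: "Rep_coS (Abs_coS (\<Inter>(Rep_coS ` A))) = \<Inter>(Rep_coS ` A)"
  by (rule Abs_coS_inverse) (auto intro!: is_sublocale_Inter simp: Rep_coS_sl)

lemma Rep_Abs_Int: "Rep_coS (Abs_coS (Rep_coS S \<inter> Rep_coS T)) = Rep_coS S \<inter> Rep_coS T"
proof -
  have "Rep_coS S \<inter> Rep_coS T = \<Inter>(Rep_coS ` {S, T})" by auto
  then show ?thesis using Rep_Abs_Inter[of "{S,T}"] by simp
qed

instantiation coS :: (frame) complete_lattice
begin

definition less_eq_coS :: "'a coS \<Rightarrow> 'a coS \<Rightarrow> bool" where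
  "S \<le> T \<longleftrightarrow> Rep_coS T \<subseteq> Rep_coS S"
definition less_coS :: "'a coS \<Rightarrow> 'a coS \<Rightarrow> bool" where
  "S < T \<longleftrightarrow> Rep_coS T \<subset> Rep_coS S"
definition sup_coS :: "'a coS \<Rightarrow> 'a coS \<Rightarrow> 'a coS" where
  "sup S T = Abs_coS (Rep_coS S \<inter> Rep_coS T)"
definition inf_coS :: "'a coS \<Rightarrow> 'a coS \<Rightarrow> 'a coS" where
  "inf S T = Abs_coS (sl_hull (Rep_coS S \<union> Rep_coS T))"
definition Sup_coS :: "'a coS set \<Rightarrow> 'a coS" where
  "Sup A = Abs_coS (\<Inter>(Rep_coS ` A))"
definition Inf_coS :: "'a coS set \<Rightarrow> 'a coS" where
  "Inf A = Abs_coS (sl_hull (\<Union>(Rep_coS ` A)))"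
definition bot_coS :: "'a coS" where
  "bot = Abs_coS UNIV"
definition top_coS :: "'a coS" where
  "top = Abs_coS (sl_hull {})"

instance
proof
  fix x y z :: "'a coS" and A :: "'a coS set"
  show "(x < y) = (x \<le> y \<and> \<not> y \<le> x)"
    by (auto simp: less_eq_coS_def less_coS_def)
  show "x \<le> x" by (simp add: less_eq_coS_def)
  show "x \<le> y \<Longrightarrow> y \<le> z \<Longrightarrow> x \<le> z" by (auto simp: less_eq_coS_def)
  show "x \<le> y \<Longrightarrow> y \<le> x \<Longrightarrow> x = y"
    by (simp add: less_eq_coS_def Rep_coS_inject)
  show "inf x y \<le> x" "inf x y \<le> y"
    by (auto simp: less_eq_coS_def inf_coS_def Rep_Abs_hull intro: subsetD[OF hull_sub])
  show "x \<le> y \<Longrightarrow> x \<le> z \<Longrightarrow> x \<le> inf y z"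
    unfolding less_eq_coS_def inf_coS_def Rep_Abs_hull
    by (rule hull_least[OF Rep_coS_sl]) auto
  show "x \<le> sup x y" "y \<le> sup x y"
    by (auto simp: less_eq_coS_def sup_coS_def Rep_Abs_Int)
  show "y \<le> x \<Longrightarrow> z \<le> x \<Longrightarrow> sup y z \<le> x"
    by (auto simp: less_eq_coS_def sup_coS_def Rep_Abs_Int)
  show "x \<in> A \<Longrightarrow> Inf A \<le> x"
    by (auto simp: less_eq_coS_def Inf_coS_def Rep_Abs_hull intro: subsetD[OF hull_sub])
  show "(\<And>x. x \<in> A \<Longrightarrow> z \<le> x) \<Longrightarrow> z \<le> Inf A"
    unfolding less_eq_coS_def Inf_coS_def Rep_Abs_hull
    by (rule hull_least[OF Rep_coS_sl]) auto
  show "x \<in> A \<Longrightarrow> x \<le> Sup A"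
    by (auto simp: less_eq_coS_def Sup_coS_def Rep_Abs_Inter)
  show "(\<And>x. x \<in> A \<Longrightarrow> x \<le> z) \<Longrightarrow> Sup A \<le> z"
    by (auto simp: less_eq_coS_def Sup_coS_def Rep_Abs_Inter)
  show "Inf {} = (top :: 'a coS)" by (simp add: Inf_coS_def top_coS_def)
  show "Sup {} = (bot :: 'a coS)" by (simp add: Sup_coS_def bot_coS_def)
qed

end

text \<open>A pair (u, d): u r is the image of (r,---), d s the image of (---,s).\<close>
type_synonym 'b rfun = "(rat \<Rightarrow> 'b) \<times> (rat \<Rightarrow> 'b)"

text \<open>Frame homomorphisms L(IR-bar) \<rightarrow> M correspond exactly to assignments on the generators
  satisfying the relations (r1), (r3), (r4).\<close>
definition is_rhom :: "('b::complete_lattice) rfun \<Rightarrow> bool" where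
  "is_rhom f \<longleftrightarrow>
     (\<forall>r s. s \<le> r \<longrightarrow> inf (fst f r) (snd f s) = bot) \<and>
     (\<forall>r. fst f r = (SUP s\<in>{s. r < s}. fst f s)) \<and>
     (\<forall>s. snd f s = (SUP r\<in>{r. r < s}. snd f r))"

definition Cont :: "('b::complete_lattice) rfun set" where
  "Cont = {f. is_rhom f \<and>
     (\<forall>r s. r < s \<longrightarrow> sup (fst f r) (snd f s) = top) \<and>
     (SUP r. fst f r) = top \<and> (SUP s. snd f s) = top}"

definition pcompl :: "'b::complete_lattice \<Rightarrow> 'b" where
  "pcompl a = Sup {b. inf b a = bot}"

definition Fbar :: "('b::complete_lattice) rfun set" where
  "Fbar = {f. is_rhom f \<and>
     (\<forall>r s. r < s \<longrightarrow> pcompl (fst f r) \<le> snd f s \<and> pcompl (snd f s) \<le> fst f r)}"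

definition rle :: "('b::complete_lattice) rfun \<Rightarrow> 'b rfun \<Rightarrow> bool" where
  "rle f g \<longleftrightarrow> (\<forall>r. fst f r \<le> fst g r) \<and> (\<forall>s. snd g s \<le> snd f s)"

definition pinf :: "('b::complete_lattice) rfun" where
  "pinf = (\<lambda>_. top, \<lambda>_. bot)"

definition minf :: "('b::complete_lattice) rfun" where
  "minf = (\<lambda>_. bot, \<lambda>_. top)"

definition Fbar_join_is :: "('b::complete_lattice) rfun \<Rightarrow> 'b rfun \<Rightarrow> 'b rfun \<Rightarrow> bool" where
  "Fbar_join_is f g h \<longleftrightarrow> h \<in> Fbar \<and> rle f h \<and> rle g h \<and>
     (\<forall>k\<in>Fbar. rle f k \<and> rle g k \<longrightarrow> rle h k)"

definition Fbar_meet_is :: "('b::complete_lattice) rfun \<Rightarrow> 'b rfun \<Rightarrow> 'b rfun \<Rightarrow> bool" where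
  "Fbar_meet_is f g h \<longleftrightarrow> h \<in> Fbar \<and> rle h f \<and> rle h g \<and>
     (\<forall>k\<in>Fbar. rle k f \<and> rle k g \<longrightarrow> rle k h)"

definition Fr :: "('b::complete_lattice) rfun set" where
  "Fr = {f \<in> Fbar. \<forall>g\<in>Fbar.
     (Fbar_join_is f g pinf \<longrightarrow> g = pinf) \<and> (Fbar_meet_is f g minf \<longrightarrow> g = minf)}"

definition extremally_disconnected :: "('b::complete_lattice) itself \<Rightarrow> bool" where
  "extremally_disconnected _ \<longleftrightarrow> (\<forall>a::'b. sup (pcompl a) (pcompl (pcompl a)) = top)"

definition is_cozero :: "'b::complete_lattice \<Rightarrow> bool" where
  "is_cozero a \<longleftrightarrow> (\<exists>f\<in>Cont. a = sup (snd f 0) (fst f 0))"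

definition P_frame :: "('b::complete_lattice) itself \<Rightarrow> bool" where
  "P_frame _ \<longleftrightarrow> (\<forall>a::'b. is_cozero a \<longrightarrow> (\<exists>b. inf a b = bot \<and> sup a b = top))"

end

theory Submission
  imports Defs
begin

(* The argument works in an arbitrary frame M in place of coS(L), which is a frame.

   Continuous functions always lie in F(M): if f is continuous and f \<or> g = +\<infinity> in F-bar(M),
   then the pointwise maximum of f and g is an upper bound in F-bar(M), so
   f(\<midarrow>,t) \<and> g(\<midarrow>,t) = 0 for all t; as the f(\<midarrow>,t) cover M, g = +\<infinity>.  Meets reduce to
   joins via f \<mapsto> -f.

   If F(M) = C(M), the function that is 1 on a** and 0 on a* is bounded, hence in F(M),
   hence continuous, and (r2) for it says a* \<or> a** = 1.  So M is extremally disconnected,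
   and then the De Morgan law (x \<and> y)* = x* \<or> y* makes pointwise maxima work for all of
   F-bar(M).  Hence for a cozero element a = coz f the function that is 1/|f| on a** and 0 on
   a* lies in F(M); its continuity gives a \<or> a* = 1.

   Conversely, in an extremally disconnected frame every f in F-bar(M) satisfies (r2), so
   e = \<Squnion>\<^sub>r f(r,\<midarrow>) is the cozero element of f composed with an order embedding of \<rat> into
   (0,2).  In a P-frame e has a complement b; the function that is +\<infinity> on b and -\<infinity> on e
   meets f in -\<infinity>, so b = 0 and e = 1, which is (r5); (r6) follows for -f. *)

subclass (in frame) distrib_lattice
proof
  fix x y z :: 'a
  show "sup x (inf y z) = inf (sup x y) (sup x z)"
    by (rule distrib_imp1) (use frame_inf_Sup[of _ "{_,_}"] in simp)
qed

lemma frame_inf_SUP: "inf (x::'a::frame) (SUP i\<in>I. f i) = (SUP i\<in>I. inf x (f i))"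
  by (simp add: frame_inf_Sup image_image)

lemma frame_SUP_inf: "inf (SUP i\<in>I. f i) (x::'a::frame) = (SUP i\<in>I. inf (f i) x)"
  using frame_inf_SUP[of x f I] by (simp add: inf_commute)

lemma frame_SUP_inf_SUP:
  "inf (SUP i\<in>I. f i) (SUP j\<in>J. g j) = (SUP i\<in>I. SUP j\<in>J. inf (f i) (g j :: 'a::frame))"
  unfolding frame_SUP_inf by (simp only: frame_inf_SUP)

lemma le_sup_if_cover:
  fixes z :: "'a::frame"
  assumes "sup u v = top" "inf z u \<le> p" "inf z v \<le> q"
  shows "z \<le> sup p q"
proof -
  have "z = sup (inf z u) (inf z v)" using assms(1) by (simp flip: inf_sup_distrib1)
  also have "\<dots> \<le> sup p q" using assms(2,3) by (rule sup_mono)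
  finally show ?thesis .
qed

section \<open>Pseudocomplements\<close>

lemma inf_pcompl_self: "inf (pcompl a) (a::'a::frame) = bot"
  unfolding pcompl_def using frame_SUP_inf[of "\<lambda>b. b" "{b. inf b a = bot}" a] by simp

lemma inf_self_pcompl: "inf (a::'a::frame) (pcompl a) = bot"
  using inf_pcompl_self[of a] by (simp add: inf_commute)

lemma le_pcompl_iff: "(b::'a::frame) \<le> pcompl a \<longleftrightarrow> inf b a = bot"
proof
  assume "b \<le> pcompl a"
  then have "inf b a \<le> inf (pcompl a) a" by (rule inf_mono) simp
  then show "inf b a = bot" by (simp add: inf_pcompl_self bot_unique)
qed (simp add: pcompl_def Sup_upper)

lemma pcompl_antimono: "(a::'a::frame) \<le> b \<Longrightarrow> pcompl b \<le> pcompl a"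
  by (metis inf_mono inf_pcompl_self le_bot le_pcompl_iff order_refl)

lemma le_pcompl_pcompl: "(a::'a::frame) \<le> pcompl (pcompl a)"
  by (simp add: le_pcompl_iff inf_self_pcompl)

lemma pcompl_pcompl_pcompl: "pcompl (pcompl (pcompl (a::'a::frame))) = pcompl a"
  by (simp add: order.antisym pcompl_antimono le_pcompl_pcompl)

lemma pcompl_top: "pcompl (top::'a::frame) = bot"
  using inf_pcompl_self[of "top::'a"] by simp

lemma pcompl_bot: "pcompl (bot::'a::frame) = top"
  by (simp add: le_pcompl_iff top_unique[symmetric])

lemma pcompl_le_if_sup_eq_top: "sup a b = (top::'a::frame) \<Longrightarrow> pcompl a \<le> b"
  using le_sup_if_cover[of a b "pcompl a" bot b] by (simp add: inf_pcompl_self)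

lemma inf_pcompl_inf_le: "inf (pcompl (inf x y)) (x::'a::frame) \<le> pcompl y"
  using inf_pcompl_self[of "inf x y"] by (simp add: le_pcompl_iff inf_assoc)

lemma pcompl_sup_pcompl: "pcompl (sup a (pcompl a)) = (bot::'a::frame)"
proof -
  have "pcompl (sup a (pcompl a)) \<le> inf (pcompl a) (pcompl (pcompl a))"
    by (simp add: pcompl_antimono)
  then show ?thesis by (simp add: inf_self_pcompl bot_unique)
qed

lemma extremally_disconnectedD:
  "extremally_disconnected TYPE('a::complete_lattice) \<Longrightarrow>
    sup (pcompl a) (pcompl (pcompl a)) = (top::'a)"
  by (simp add: extremally_disconnected_def)

lemma pcompl_inf_le_sup:
  assumes "extremally_disconnected TYPE('a::frame)"
  shows "pcompl (inf x y) \<le> sup (pcompl x) (pcompl (y::'a))"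
proof (rule le_sup_if_cover[OF extremally_disconnectedD[OF assms, of x]])
  show "inf (pcompl (inf x y)) (pcompl x) \<le> pcompl x" by simp
  have "inf (pcompl (inf x y)) y \<le> pcompl x"
    using inf_pcompl_inf_le[of y x] by (simp add: inf_commute)
  then have "inf (inf (pcompl (inf x y)) y) (pcompl (pcompl x))
      \<le> inf (pcompl x) (pcompl (pcompl x))"
    by (rule inf_mono) simp
  then show "inf (pcompl (inf x y)) (pcompl (pcompl x)) \<le> pcompl y"
    by (simp add: le_pcompl_iff inf_self_pcompl bot_unique ac_simps)
qed

section \<open>Partial real functions\<close>

lemma rhom_disjoint: "is_rhom f \<Longrightarrow> s \<le> r \<Longrightarrow> inf (fst f r) (snd f s) = bot"
  unfolding is_rhom_def by blast

lemma rhom_fst_eq_SUP: "is_rhom f \<Longrightarrow> fst f r = (SUP s\<in>{s. r < s}. fst f s)"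
  unfolding is_rhom_def by blast

lemma rhom_snd_eq_SUP: "is_rhom f \<Longrightarrow> snd f s = (SUP r\<in>{r. r < s}. snd f r)"
  unfolding is_rhom_def by blast

lemma rhom_fst_antimono:
  assumes "is_rhom f" "r \<le> s" shows "fst f s \<le> fst f r"
proof (cases "r = s")
  case False
  with assms have "fst f s \<le> (SUP t\<in>{t. r < t}. fst f t)" by (intro SUP_upper) simp
  then show ?thesis by (simp flip: rhom_fst_eq_SUP[OF assms(1)])
qed simp

lemma rhom_snd_mono:
  assumes "is_rhom f" "r \<le> s" shows "snd f r \<le> snd f s"
proof (cases "r = s")
  case False
  with assms have "snd f r \<le> (SUP t\<in>{t. t < s}. snd f t)" by (intro SUP_upper) simp
  then show ?thesis by (simp flip: rhom_snd_eq_SUP[OF assms(1)])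
qed simp

lemma is_rhomI:
  assumes "\<And>r s. s \<le> r \<Longrightarrow> inf (fst f r) (snd f s) = bot"
    and "\<And>r s. r \<le> s \<Longrightarrow> fst f s \<le> fst f r"
    and "\<And>r s. r \<le> s \<Longrightarrow> snd f r \<le> snd f s"
    and "\<And>r. fst f r \<le> (SUP s\<in>{s. r < s}. fst f s)"
    and "\<And>s. snd f s \<le> (SUP r\<in>{r. r < s}. snd f r)"
  shows "is_rhom f"
  unfolding is_rhom_def
proof (intro conjI allI impI)
  show "inf (fst f r) (snd f s) = bot" if "s \<le> r" for r s using that by (rule assms(1))
  show "fst f r = (SUP s\<in>{s. r < s}. fst f s)" for r
    by (intro order.antisym assms(4) SUP_least assms(2)) simp
  show "snd f s = (SUP r\<in>{r. r < s}. snd f r)" for s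
    by (intro order.antisym assms(5) SUP_least assms(3)) simp
qed

lemma FbarI:
  "is_rhom f \<Longrightarrow> (\<And>r s. r < s \<Longrightarrow> pcompl (fst f r) \<le> snd f s) \<Longrightarrow>
    (\<And>r s. r < s \<Longrightarrow> pcompl (snd f s) \<le> fst f r) \<Longrightarrow> f \<in> Fbar"
  by (simp add: Fbar_def)

lemma Fbar_rhom: "f \<in> Fbar \<Longrightarrow> is_rhom f"
  by (simp add: Fbar_def)

lemma Fbar_pcompl_fst_le: "f \<in> Fbar \<Longrightarrow> r < s \<Longrightarrow> pcompl (fst f r) \<le> snd f s"
  by (simp add: Fbar_def)

lemma Fbar_pcompl_snd_le: "f \<in> Fbar \<Longrightarrow> r < s \<Longrightarrow> pcompl (snd f s) \<le> fst f r"
  by (simp add: Fbar_def)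

lemma ContI:
  "is_rhom f \<Longrightarrow> (\<And>r s. r < s \<Longrightarrow> sup (fst f r) (snd f s) = top) \<Longrightarrow>
    (SUP r. fst f r) = top \<Longrightarrow> (SUP s. snd f s) = top \<Longrightarrow> f \<in> Cont"
  by (simp add: Cont_def)

lemma Cont_rhom: "f \<in> Cont \<Longrightarrow> is_rhom f"
  by (simp add: Cont_def)

lemma Cont_cover: "f \<in> Cont \<Longrightarrow> r < s \<Longrightarrow> sup (fst f r) (snd f s) = top"
  by (simp add: Cont_def)

lemma Cont_SUP_fst: "f \<in> Cont \<Longrightarrow> (SUP r. fst f r) = top"
  by (simp add: Cont_def)

lemma Cont_SUP_snd: "f \<in> Cont \<Longrightarrow> (SUP s. snd f s) = top"
  by (simp add: Cont_def)

lemma Cont_subset_Fbar: "(Cont :: ('a::frame) rfun set) \<subseteq> Fbar"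
proof
  fix f :: "'a rfun" assume f: "f \<in> Cont"
  show "f \<in> Fbar"
  proof (rule FbarI[OF Cont_rhom[OF f]])
    fix r s :: rat assume "r < s"
    then have "sup (fst f r) (snd f s) = top" by (rule Cont_cover[OF f])
    then show "pcompl (fst f r) \<le> snd f s" "pcompl (snd f s) \<le> fst f r"
      by (simp_all add: pcompl_le_if_sup_eq_top sup_commute)
  qed
qed

lemma rle_trans: "rle f g \<Longrightarrow> rle g h \<Longrightarrow> rle f h"
  unfolding rle_def by (meson order_trans)

definition rneg :: "'b rfun \<Rightarrow> 'b rfun" where
  "rneg f = (\<lambda>r. snd f (- r), \<lambda>s. fst f (- s))"

lemma rneg_simps [simp]:
  "fst (rneg f) r = snd f (- r)" "snd (rneg f) s = fst f (- s)"
  "rneg (rneg f) = f" "rneg pinf = minf" "rneg minf = pinf"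
  by (simp_all add: rneg_def pinf_def minf_def)

lemma SUP_uminus_rat: "(SUP s::rat. g (- s)) = (SUP t. g t)"
proof -
  have "range (uminus :: rat \<Rightarrow> rat) = UNIV" by (rule surjI[of _ uminus]) simp
  then show ?thesis by (simp only: image_image[of g uminus, symmetric])
qed

lemma is_rhom_rneg:
  assumes f: "is_rhom f" shows "is_rhom (rneg f)"
proof (rule is_rhomI, unfold rneg_simps)
  show "inf (snd f (- r)) (fst f (- s)) = bot" if "s \<le> r" for r s :: rat
    using that by (subst inf_commute) (simp add: rhom_disjoint[OF f])
  show "snd f (- s) \<le> snd f (- r)" "fst f (- r) \<le> fst f (- s)" if "r \<le> s" for r s :: rat
    using that by (simp_all add: rhom_snd_mono[OF f] rhom_fst_antimono[OF f])
  show "snd f (- r) \<le> (SUP s\<in>{s. r < s}. snd f (- s))" for r :: rat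
  proof (subst rhom_snd_eq_SUP[OF f], rule SUP_least)
    fix t assume "t \<in> {t. t < - r}"
    then show "snd f t \<le> (SUP s\<in>{s. r < s}. snd f (- s))" by (intro SUP_upper2[of "- t"]) auto
  qed
  show "fst f (- s) \<le> (SUP r\<in>{r. r < s}. fst f (- r))" for s :: rat
  proof (subst rhom_fst_eq_SUP[OF f], rule SUP_least)
    fix t assume "t \<in> {t. - s < t}"
    then show "fst f t \<le> (SUP r\<in>{r. r < s}. fst f (- r))" by (intro SUP_upper2[of "- t"]) auto
  qed
qed

lemma rneg_Fbar: "f \<in> Fbar \<Longrightarrow> rneg f \<in> Fbar"
  by (rule FbarI[OF is_rhom_rneg[OF Fbar_rhom]])
    (simp_all add: Fbar_pcompl_fst_le Fbar_pcompl_snd_le)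

lemma rneg_Cont: "f \<in> Cont \<Longrightarrow> rneg f \<in> Cont"
  by (rule ContI[OF is_rhom_rneg[OF Cont_rhom]])
    (simp_all add: Cont_cover sup_commute SUP_uminus_rat Cont_SUP_fst Cont_SUP_snd)

lemma rle_rneg_iff [simp]: "rle (rneg g) (rneg f) \<longleftrightarrow> rle f g"
proof
  assume "rle (rneg g) (rneg f)"
  then have "fst f (- (- r)) \<le> fst g (- (- r)) \<and> snd g (- (- r)) \<le> snd f (- (- r))" for r
    unfolding rle_def rneg_simps by blast
  then show "rle f g" unfolding rle_def by simp
qed (simp add: rle_def)

lemma rle_rneg_left: "rle (rneg f) g \<longleftrightarrow> rle (rneg g) f"
  using rle_rneg_iff[of g "rneg f"] by simp

lemma rle_rneg_right: "rle f (rneg g) \<longleftrightarrow> rle g (rneg f)"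
  using rle_rneg_iff[of "rneg g" f] by simp

lemma Fbar_join_is_rneg:
  assumes "Fbar_meet_is f g h" shows "Fbar_join_is (rneg f) (rneg g) (rneg h)"
  unfolding Fbar_join_is_def
proof (intro conjI ballI impI)
  show "rneg h \<in> Fbar" "rle (rneg f) (rneg h)" "rle (rneg g) (rneg h)"
    using assms by (simp_all add: Fbar_meet_is_def rneg_Fbar)
  fix k assume "k \<in> Fbar" "rle (rneg f) k \<and> rle (rneg g) k"
  then have "rneg k \<in> Fbar" "rle (rneg k) f" "rle (rneg k) g"
    by (simp_all add: rneg_Fbar rle_rneg_left)
  then have "rle (rneg k) h" using assms unfolding Fbar_meet_is_def by blast
  then show "rle (rneg h) k" by (simp add: rle_rneg_left)
qed

section \<open>Pointwise maxima\<close>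

lemma SUP_less_eq_SUP_SUP_less:
  fixes m :: "'a::dense_linorder \<Rightarrow> 'b::complete_lattice"
  shows "(SUP t\<in>{t. t < s}. m t) = (SUP r\<in>{r. r < s}. SUP t\<in>{t. t < r}. m t)"
proof (rule order.antisym)
  show "(SUP t\<in>{t. t < s}. m t) \<le> (SUP r\<in>{r. r < s}. SUP t\<in>{t. t < r}. m t)"
  proof (rule SUP_least)
    fix t assume "t \<in> {t. t < s}"
    then obtain r where "t < r" "r < s" using dense by auto
    then show "m t \<le> (SUP r\<in>{r. r < s}. SUP t\<in>{t. t < r}. m t)"
      by (intro SUP_upper2[of r] SUP_upper) simp_all
  qed
  show "(SUP r\<in>{r. r < s}. SUP t\<in>{t. t < r}. m t) \<le> (SUP t\<in>{t. t < s}. m t)"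
    by (intro SUP_least SUP_subset_mono) auto
qed

definition rmax :: "('b::complete_lattice) rfun \<Rightarrow> 'b rfun \<Rightarrow> 'b rfun" where
  "rmax f g = (\<lambda>r. sup (fst f r) (fst g r), \<lambda>s. SUP t\<in>{t. t < s}. inf (snd f t) (snd g t))"

lemma rmax_simps:
  "fst (rmax f g) r = sup (fst f r) (fst g r)"
  "snd (rmax f g) s = (SUP t\<in>{t. t < s}. inf (snd f t) (snd g t))"
  by (simp_all add: rmax_def)

lemma is_rhom_rmax:
  assumes f: "is_rhom (f::('b::frame) rfun)" and g: "is_rhom g"
  shows "is_rhom (rmax f g)"
proof (rule is_rhomI, unfold rmax_simps)
  fix r s :: rat assume "s \<le> r"
  have "inf (sup (fst f r) (fst g r)) (inf (snd f t) (snd g t)) = bot" if "t < s" for t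
  proof -
    have "inf (sup (fst f r) (fst g r)) (inf (snd f t) (snd g t))
        \<le> sup (inf (fst f r) (snd f t)) (inf (fst g r) (snd g t))"
      unfolding inf_sup_distrib2 by (intro sup_mono inf_mono) simp_all
    also have "\<dots> = bot" using \<open>s \<le> r\<close> that by (simp add: rhom_disjoint[OF f] rhom_disjoint[OF g])
    finally show ?thesis by (simp add: bot_unique)
  qed
  then show "inf (sup (fst f r) (fst g r)) (SUP t\<in>{t. t < s}. inf (snd f t) (snd g t)) = bot"
    by (simp add: frame_inf_SUP)
next
  fix r s :: rat assume "r \<le> s"
  then show "sup (fst f s) (fst g s) \<le> sup (fst f r) (fst g r)"
    by (intro sup_mono rhom_fst_antimono[OF f] rhom_fst_antimono[OF g])
  show "(SUP t\<in>{t. t < r}. inf (snd f t) (snd g t)) \<le> (SUP t\<in>{t. t < s}. inf (snd f t) (snd g t))"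
    using \<open>r \<le> s\<close> by (intro SUP_subset_mono) auto
next
  fix r :: rat
  have "fst f r \<le> (SUP s\<in>{s. r < s}. sup (fst f s) (fst g s))"
    "fst g r \<le> (SUP s\<in>{s. r < s}. sup (fst f s) (fst g s))"
    by (subst rhom_fst_eq_SUP[OF f] rhom_fst_eq_SUP[OF g], rule SUP_mono', simp)+
  then show "sup (fst f r) (fst g r) \<le> (SUP s\<in>{s. r < s}. sup (fst f s) (fst g s))"
    by (rule sup_least)
next
  fix s :: rat
  show "(SUP t\<in>{t. t < s}. inf (snd f t) (snd g t))
      \<le> (SUP r\<in>{r. r < s}. SUP t\<in>{t. t < r}. inf (snd f t) (snd g t))"
    by (simp add: SUP_less_eq_SUP_SUP_less[symmetric])
qed

lemma rle_rmax1:
  assumes "is_rhom f" shows "rle f (rmax f g)"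
  unfolding rle_def rmax_simps
proof (intro conjI allI)
  show "fst f r \<le> sup (fst f r) (fst g r)" for r by simp
  show "(SUP t\<in>{t. t < s}. inf (snd f t) (snd g t)) \<le> snd f s" for s
    by (subst rhom_snd_eq_SUP[OF assms]) (rule SUP_mono, auto)
qed

lemma rle_rmax2:
  assumes "is_rhom g" shows "rle g (rmax f g)"
  unfolding rle_def rmax_simps
proof (intro conjI allI)
  show "fst g r \<le> sup (fst f r) (fst g r)" for r by simp
  show "(SUP t\<in>{t. t < s}. inf (snd f t) (snd g t)) \<le> snd g s" for s
    by (subst rhom_snd_eq_SUP[OF assms]) (rule SUP_mono, auto)
qed

definition max_compatible :: "('b::complete_lattice) rfun \<Rightarrow> 'b rfun \<Rightarrow> bool" where
  "max_compatible f g \<longleftrightarrow>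
     (\<forall>r t. r < t \<longrightarrow> pcompl (inf (snd f t) (snd g t)) \<le> sup (fst f r) (fst g r))"

lemma rmax_Fbar:
  assumes f: "(f::('b::frame) rfun) \<in> Fbar" and g: "g \<in> Fbar" and fg: "max_compatible f g"
  shows "rmax f g \<in> Fbar"
proof (rule FbarI[OF is_rhom_rmax[OF Fbar_rhom[OF f] Fbar_rhom[OF g]]])
  fix r s :: rat assume "r < s"
  then obtain t where rt: "r < t" and ts: "t < s" using dense by blast
  have t: "inf (snd f t) (snd g t) \<le> snd (rmax f g) s"
    unfolding rmax_simps using ts by (intro SUP_upper) simp
  have "pcompl (fst (rmax f g) r) \<le> inf (pcompl (fst f r)) (pcompl (fst g r))"
    unfolding rmax_simps by (intro le_infI pcompl_antimono) simp_all
  also have "\<dots> \<le> inf (snd f t) (snd g t)"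
    using rt by (intro inf_mono Fbar_pcompl_fst_le[OF f] Fbar_pcompl_fst_le[OF g])
  finally show "pcompl (fst (rmax f g) r) \<le> snd (rmax f g) s" using t by (rule order_trans)
  have "pcompl (snd (rmax f g) s) \<le> pcompl (inf (snd f t) (snd g t))"
    by (rule pcompl_antimono[OF t])
  also have "\<dots> \<le> fst (rmax f g) r" using fg rt unfolding max_compatible_def rmax_simps by blast
  finally show "pcompl (snd (rmax f g) s) \<le> fst (rmax f g) r" .
qed

lemma max_compatible_if_Cont:
  assumes f: "(f::('b::frame) rfun) \<in> Cont" and g: "g \<in> Fbar"
  shows "max_compatible f g"
  unfolding max_compatible_def
proof (intro allI impI)
  fix r t :: rat assume rt: "r < t"
  have "inf (pcompl (inf (snd f t) (snd g t))) (snd f t) \<le> fst g r"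
    using inf_pcompl_inf_le Fbar_pcompl_snd_le[OF g rt] by (rule order_trans)
  then show "pcompl (inf (snd f t) (snd g t)) \<le> sup (fst f r) (fst g r)"
    by (rule le_sup_if_cover[OF Cont_cover[OF f rt] inf_le2])
qed

lemma max_compatible_if_extremally_disconnected:
  assumes "extremally_disconnected TYPE('b::frame)" "(f::'b rfun) \<in> Fbar" "g \<in> Fbar"
  shows "max_compatible f g"
  unfolding max_compatible_def
proof (intro allI impI)
  fix r t :: rat assume "r < t"
  have "pcompl (inf (snd f t) (snd g t)) \<le> sup (pcompl (snd f t)) (pcompl (snd g t))"
    using assms(1) by (rule pcompl_inf_le_sup)
  also have "\<dots> \<le> sup (fst f r) (fst g r)"
    using \<open>r < t\<close> assms(2,3) by (intro sup_mono Fbar_pcompl_snd_le)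
  finally show "pcompl (inf (snd f t) (snd g t)) \<le> sup (fst f r) (fst g r)" .
qed

lemma Fbar_eq_pinf_if_snd_bot:
  assumes "g \<in> Fbar" "\<And>s. snd g s = bot" shows "g = (pinf::('b::frame) rfun)"
proof -
  have "fst g r = top" for r
    using Fbar_pcompl_snd_le[OF assms(1), of r "r + 1"] assms(2)
    by (simp add: pcompl_bot top_unique)
  then show ?thesis using assms(2) unfolding pinf_def by (simp add: prod_eq_iff fun_eq_iff)
qed

lemma Fbar_eq_minf_if_fst_bot:
  assumes "g \<in> Fbar" "\<And>r. fst g r = bot" shows "g = (minf::('b::frame) rfun)"
proof -
  have "snd g s = top" for s
    using Fbar_pcompl_fst_le[OF assms(1), of "s - 1" s] assms(2)
    by (simp add: pcompl_bot top_unique)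
  then show ?thesis using assms(2) unfolding minf_def by (simp add: prod_eq_iff fun_eq_iff)
qed

text \<open>The join of \<open>f\<close> and \<open>g\<close> lies below \<open>rmax f' g\<close>. If it is \<open>+\<infinity>\<close>, then
  \<open>f'(\<midarrow>,t) \<and> g(\<midarrow>,t) = 0\<close> for all \<open>t\<close>, and density of \<open>\<Squnion>\<^sub>s f'(\<midarrow>,s)\<close> forces
  \<open>g(\<midarrow>,t) = 0\<close>.\<close>
lemma Fbar_join_is_pinf_imp_pinf:
  fixes f f' g :: "('b::frame) rfun"
  assumes f': "f' \<in> Fbar" "rle f f'" "pcompl (SUP s. snd f' s) = bot"
    and g: "g \<in> Fbar" "max_compatible f' g"
    and join: "Fbar_join_is f g pinf"
  shows "g = pinf"
proof (rule Fbar_eq_pinf_if_snd_bot[OF g(1)])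
  have "rle f (rmax f' g)" by (rule rle_trans[OF f'(2) rle_rmax1[OF Fbar_rhom[OF f'(1)]]])
  moreover have "rle g (rmax f' g)" by (rule rle_rmax2[OF Fbar_rhom[OF g(1)]])
  ultimately have max: "rle pinf (rmax f' g)"
    using join rmax_Fbar[OF f'(1) g] unfolding Fbar_join_is_def by blast
  have "inf (snd f' t) (snd g t) = bot" for t
  proof -
    have "inf (snd f' t) (snd g t) \<le> snd (rmax f' g) (t + 1)"
      unfolding rmax_simps by (intro SUP_upper) simp
    also have "\<dots> \<le> bot" using max by (simp add: rle_def pinf_def)
    finally show ?thesis by (rule bot_unique[THEN iffD1])
  qed
  then have "inf (snd g t) (snd f' s) = bot" for s t
    using inf_mono[OF rhom_snd_mono[OF Fbar_rhom[OF g(1)], of t "max s t"]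
        rhom_snd_mono[OF Fbar_rhom[OF f'(1)], of s "max s t"]]
    by (simp add: inf_commute bot_unique)
  then have "inf (snd g t) (SUP s. snd f' s) = bot" for t by (simp add: frame_inf_SUP)
  then show "snd g t = bot" for t using f'(3) by (simp flip: le_pcompl_iff add: bot_unique)
qed

lemma FrI:
  fixes f :: "('b::frame) rfun"
  assumes "f \<in> Fbar"
    and "\<And>g. g \<in> Fbar \<Longrightarrow> Fbar_join_is f g pinf \<Longrightarrow> g = pinf"
    and "\<And>g. g \<in> Fbar \<Longrightarrow> Fbar_join_is (rneg f) g pinf \<Longrightarrow> g = pinf"
  shows "f \<in> Fr"
  unfolding Fr_def
proof (intro CollectI conjI ballI impI assms(1))
  fix g :: "'b rfun" assume "g \<in> Fbar"
  then show "Fbar_join_is f g pinf \<Longrightarrow> g = pinf" by (rule assms(2))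
  assume "Fbar_meet_is f g minf"
  then have "Fbar_join_is (rneg f) (rneg g) pinf" using Fbar_join_is_rneg[of f g minf] by simp
  then have "rneg g = pinf" using assms(3) rneg_Fbar[OF \<open>g \<in> Fbar\<close>] by blast
  then show "g = minf" by (metis rneg_simps(3,5))
qed

lemma Fr_Fbar: "f \<in> Fr \<Longrightarrow> f \<in> Fbar"
  by (simp add: Fr_def)

lemma Fr_join_pinf: "f \<in> Fr \<Longrightarrow> g \<in> Fbar \<Longrightarrow> Fbar_join_is f g pinf \<Longrightarrow> g = pinf"
  by (simp add: Fr_def)

lemma Fr_meet_minf: "f \<in> Fr \<Longrightarrow> g \<in> Fbar \<Longrightarrow> Fbar_meet_is f g minf \<Longrightarrow> g = minf"
  by (simp add: Fr_def)

lemma Cont_join_pinf: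
  fixes f :: "('b::frame) rfun"
  assumes "f \<in> Cont" "g \<in> Fbar" "Fbar_join_is f g pinf"
  shows "g = pinf"
  using Cont_subset_Fbar assms max_compatible_if_Cont[OF assms(1,2)]
  by (intro Fbar_join_is_pinf_imp_pinf[of f]) (auto simp: rle_def Cont_SUP_snd pcompl_top)

lemma Cont_subset_Fr: "(Cont :: ('b::frame) rfun set) \<subseteq> Fr"
proof
  fix f :: "'b rfun" assume "f \<in> Cont"
  then show "f \<in> Fr"
    using Cont_subset_Fbar Cont_join_pinf rneg_Cont by (intro FrI) blast+
qed

section \<open>Extremal disconnectedness\<close>

text \<open>The partial function taking the value \<open>q\<close> on \<open>x\<close> and \<open>p\<close> on \<open>y\<close>.\<close>
definition rstep :: "rat \<Rightarrow> rat \<Rightarrow> 'b::complete_lattice \<Rightarrow> 'b \<Rightarrow> 'b rfun" where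
  "rstep p q x y = (\<lambda>r. if r < p then top else if r < q then x else bot,
                     \<lambda>s. if s \<le> p then bot else if s \<le> q then y else top)"

lemma rstep_simps:
  "fst (rstep p q x y) r = (if r < p then top else if r < q then x else bot)"
  "snd (rstep p q x y) s = (if s \<le> p then bot else if s \<le> q then y else top)"
  by (simp_all add: rstep_def)

lemma rstep_fst_le_SUP: "fst (rstep p q x y) r \<le> (SUP s\<in>{s. r < s}. fst (rstep p q x y) s)"
  unfolding rstep_simps
proof (cases "r < p")
  case True
  then obtain s where "r < s" "s < p" using dense by blast
  then show "(if r < p then top else if r < q then x else bot)
      \<le> (SUP s\<in>{s. r < s}. if s < p then top else if s < q then x else bot)"
    by (intro SUP_upper2[of s]) auto
next
  case False
  show "(if r < p then top else if r < q then x else bot)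
      \<le> (SUP s\<in>{s. r < s}. if s < p then top else if s < q then x else bot)"
  proof (cases "r < q")
    case True
    then obtain s where "r < s" "s < q" using dense by blast
    then show ?thesis using False by (intro SUP_upper2[of s]) auto
  qed (use False in simp)
qed

lemma rstep_snd_le_SUP:
  assumes "p \<le> q"
  shows "snd (rstep p q x y) s \<le> (SUP r\<in>{r. r < s}. snd (rstep p q x y) r)"
  unfolding rstep_simps
proof (cases "s \<le> q")
  case True
  show "(if s \<le> p then bot else if s \<le> q then y else top)
      \<le> (SUP r\<in>{r. r < s}. if r \<le> p then bot else if r \<le> q then y else top)"
  proof (cases "p < s")
    case True
    then obtain r where "p < r" "r < s" using dense by blast
    then show ?thesis using True \<open>s \<le> q\<close> by (intro SUP_upper2[of r]) auto
  qed simp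
next
  case False
  then obtain r where "q < r" "r < s" using dense by (metis not_le)
  then show "(if s \<le> p then bot else if s \<le> q then y else top)
      \<le> (SUP r\<in>{r. r < s}. if r \<le> p then bot else if r \<le> q then y else top)"
    using False assms by (intro SUP_upper2[of r]) auto
qed

lemma is_rhom_rstep:
  assumes "p \<le> q" "inf x y = (bot::'b::frame)"
  shows "is_rhom (rstep p q x y)"
  by (rule is_rhomI[OF _ _ _ rstep_fst_le_SUP rstep_snd_le_SUP[OF assms(1)]])
    (use assms in \<open>auto simp: rstep_simps\<close>)

lemma rstep_Fbar:
  assumes "p \<le> q" "inf x y = (bot::'b::frame)" "pcompl x \<le> y" "pcompl y \<le> x"
  shows "rstep p q x y \<in> Fbar"
  by (rule FbarI[OF is_rhom_rstep[OF assms(1,2)]])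
    (use assms(3,4) in \<open>auto simp: rstep_simps pcompl_top pcompl_bot\<close>)

lemma rstep_const_Cont: "(rstep c c bot bot :: ('b::frame) rfun) \<in> Cont"
proof (rule ContI[OF is_rhom_rstep])
  show "(SUP r. fst (rstep c c bot bot :: 'b rfun) r) = top"
    by (rule top_unique[THEN iffD1], rule SUP_upper2[of "c - 1"]) (simp_all add: rstep_simps)
  show "(SUP s. snd (rstep c c bot bot :: 'b rfun) s) = top"
    by (rule top_unique[THEN iffD1], rule SUP_upper2[of "c + 1"]) (simp_all add: rstep_simps)
qed (auto simp: rstep_simps)

lemma Fbar_join_pinf_if_bounded:
  fixes f :: "('b::frame) rfun"
  assumes "rle f (rstep c c bot bot)" "g \<in> Fbar" "Fbar_join_is f g pinf"
  shows "g = pinf"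
proof (rule Fbar_join_is_pinf_imp_pinf[OF _ assms(1) _ assms(2) _ assms(3)])
  show "(rstep c c bot bot :: 'b rfun) \<in> Fbar"
    by (rule subsetD[OF Cont_subset_Fbar rstep_const_Cont])
  show "pcompl (SUP s. snd (rstep c c bot bot :: 'b rfun) s) = bot"
    by (simp add: Cont_SUP_snd[OF rstep_const_Cont] pcompl_top)
  show "max_compatible (rstep c c bot bot :: 'b rfun) g"
    by (rule max_compatible_if_Cont[OF rstep_const_Cont assms(2)])
qed

text \<open>The indicator \<open>rstep 0 1 a\<^sup>*\<^sup>* a\<^sup>*\<close> is bounded, hence lies in F; its continuity
  is exactly \<open>a\<^sup>* \<or> a\<^sup>*\<^sup>* = 1\<close>.\<close>
lemma extremally_disconnected_if_Fr_eq_Cont: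
  assumes "(Fr :: ('b::frame) rfun set) = Cont"
  shows "extremally_disconnected TYPE('b)"
  unfolding extremally_disconnected_def
proof
  fix a :: 'b
  let ?f = "rstep 0 1 (pcompl (pcompl a)) (pcompl a) :: 'b rfun"
  have f: "?f \<in> Fbar"
    by (rule rstep_Fbar) (simp_all add: inf_pcompl_self pcompl_pcompl_pcompl)
  have "?f \<in> Fr"
  proof (rule FrI[OF f])
    have "rle ?f (rstep 1 1 bot bot)" by (simp add: rle_def rstep_simps)
    then show "g = pinf" if "g \<in> Fbar" "Fbar_join_is ?f g pinf" for g
      using that by (rule Fbar_join_pinf_if_bounded)
    have "rle (rneg ?f) (rstep 0 0 bot bot)" by (simp add: rle_def rstep_simps)
    then show "g = pinf" if "g \<in> Fbar" "Fbar_join_is (rneg ?f) g pinf" for g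
      using that by (rule Fbar_join_pinf_if_bounded)
  qed
  then have "sup (fst ?f 0) (snd ?f 1) = top" using assms by (simp add: Cont_cover)
  then show "sup (pcompl a) (pcompl (pcompl a)) = top" by (simp add: rstep_simps sup_commute)
qed

section \<open>P-frames\<close>

text \<open>\<open>abs_gt f t\<close> and \<open>abs_lt f t\<close> stand for \<open>|f| > t\<close> and \<open>|f| < t\<close>.\<close>
definition abs_gt :: "('b::complete_lattice) rfun \<Rightarrow> rat \<Rightarrow> 'b" where
  "abs_gt f t = sup (fst f t) (snd f (- t))"

definition abs_lt :: "('b::complete_lattice) rfun \<Rightarrow> rat \<Rightarrow> 'b" where
  "abs_lt f t = inf (fst f (- t)) (snd f t)"

definition cozero_of :: "('b::complete_lattice) rfun \<Rightarrow> 'b" where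
  "cozero_of f = sup (snd f 0) (fst f 0)"

context
  fixes f :: "('b::frame) rfun"
  assumes f: "is_rhom f"
begin

lemma abs_lt_inf_abs_gt: "t \<le> t' \<Longrightarrow> inf (abs_lt f t) (abs_gt f t') = bot"
proof -
  assume "t \<le> t'"
  have "inf (abs_lt f t) (abs_gt f t')
      \<le> sup (inf (fst f t') (snd f t)) (inf (fst f (- t)) (snd f (- t')))"
    unfolding abs_lt_def abs_gt_def inf_sup_distrib1
    by (intro sup_mono) (simp_all add: le_infI1 le_infI2 inf_commute inf_mono)
  also have "\<dots> = bot" using \<open>t \<le> t'\<close> by (simp add: rhom_disjoint[OF f])
  finally show ?thesis by (rule bot_unique[THEN iffD1])
qed

lemma abs_lt_mono: "t \<le> t' \<Longrightarrow> abs_lt f t \<le> abs_lt f t'"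
  unfolding abs_lt_def by (intro inf_mono rhom_fst_antimono[OF f] rhom_snd_mono[OF f]) simp_all

lemma abs_gt_antimono: "t \<le> t' \<Longrightarrow> abs_gt f t' \<le> abs_gt f t"
  unfolding abs_gt_def by (intro sup_mono rhom_fst_antimono[OF f] rhom_snd_mono[OF f]) simp_all

lemma abs_lt_nonpos: "t \<le> 0 \<Longrightarrow> abs_lt f t = bot"
  unfolding abs_lt_def by (simp add: rhom_disjoint[OF f])

lemma abs_gt_le_cozero_of: "0 \<le> t \<Longrightarrow> abs_gt f t \<le> cozero_of f"
  unfolding abs_gt_def cozero_of_def
  by (intro sup_least le_supI1 le_supI2 rhom_fst_antimono[OF f] rhom_snd_mono[OF f]) simp_all

lemma abs_lt_le_SUP: "abs_lt f t \<le> (SUP t'\<in>{t'. t' < t}. abs_lt f t')"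
proof -
  have "abs_lt f t = (SUP x\<in>{x. - t < x}. SUP y\<in>{y. y < t}. inf (fst f x) (snd f y))"
    unfolding abs_lt_def
    by (simp only: rhom_fst_eq_SUP[OF f, of "- t"] rhom_snd_eq_SUP[OF f, of t] frame_SUP_inf_SUP)
  also have "\<dots> \<le> (SUP t'\<in>{t'. t' < t}. abs_lt f t')"
  proof (intro SUP_least)
    fix x y assume "x \<in> {x. - t < x}" "y \<in> {y. y < t}"
    then show "inf (fst f x) (snd f y) \<le> (SUP t'\<in>{t'. t' < t}. abs_lt f t')"
      unfolding abs_lt_def
      by (intro SUP_upper2[of "max (- x) y"] inf_mono rhom_fst_antimono[OF f] rhom_snd_mono[OF f])
        auto
  qed
  finally show ?thesis .
qed

lemma sup_fst_snd_uminus_le_SUP_abs_gt: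
  "sup (fst f t) (snd f (- t)) \<le> (SUP t'\<in>{t'. t < t'}. abs_gt f t')"
proof (rule sup_least)
  show "fst f t \<le> (SUP t'\<in>{t'. t < t'}. abs_gt f t')"
    by (subst rhom_fst_eq_SUP[OF f], rule SUP_mono) (auto simp: abs_gt_def)
  show "snd f (- t) \<le> (SUP t'\<in>{t'. t < t'}. abs_gt f t')"
  proof (subst rhom_snd_eq_SUP[OF f], rule SUP_least)
    fix y assume "y \<in> {y. y < - t}"
    then show "snd f y \<le> (SUP t'\<in>{t'. t < t'}. abs_gt f t')"
      by (intro SUP_upper2[of "- y"]) (auto simp: abs_gt_def)
  qed
qed

lemma abs_gt_le_SUP: "abs_gt f t \<le> (SUP t'\<in>{t'. t < t'}. abs_gt f t')"
  unfolding abs_gt_def[of f t] by (rule sup_fst_snd_uminus_le_SUP_abs_gt)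

lemma cozero_of_le_SUP_abs_gt: "cozero_of f \<le> (SUP t\<in>{t. 0 < t}. abs_gt f t)"
  using sup_fst_snd_uminus_le_SUP_abs_gt[of 0] by (simp add: cozero_of_def sup_commute)

end

lemma abs_gt_sup_abs_lt:
  assumes "f \<in> Cont" "t < t'"
  shows "sup (abs_gt f t) (abs_lt f t') = (top::'b::frame)"
proof -
  have "top = sup (fst f t) (snd f t')" "top = sup (snd f (- t)) (fst f (- t'))"
    using assms by (simp_all add: Cont_cover sup_commute)
  then have "top \<le> sup (abs_gt f t) (snd f t')" "top \<le> sup (abs_gt f t) (fst f (- t'))"
    unfolding abs_gt_def by (metis sup_mono sup_ge1 order_refl, metis sup_mono sup_ge2 order_refl)
  then show ?thesis unfolding abs_lt_def sup_inf_distrib1 by (simp add: top_unique)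
qed

lemma SUP_abs_lt:
  assumes "(f::('b::frame) rfun) \<in> Cont"
  shows "(SUP t. abs_lt f t) = top"
proof -
  have "top = (SUP x. SUP y. inf (fst f x) (snd f y))"
    using Cont_SUP_fst[OF assms] Cont_SUP_snd[OF assms] by (simp flip: frame_SUP_inf_SUP)
  also have "\<dots> \<le> (SUP t. abs_lt f t)"
  proof (intro SUP_least)
    fix x y
    show "inf (fst f x) (snd f y) \<le> (SUP t. abs_lt f t)"
      unfolding abs_lt_def
      by (intro SUP_upper2[of "max (- x) y"] inf_mono rhom_fst_antimono[OF Cont_rhom[OF assms]]
          rhom_snd_mono[OF Cont_rhom[OF assms]]) auto
  qed
  finally show ?thesis by (rule top_unique[THEN iffD1])
qed

text \<open>For a continuous \<open>f\<close> with cozero element \<open>a\<close>: \<open>1/|f|\<close> on \<open>a\<^sup>*\<^sup>*\<close> and \<open>0\<close> on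
  \<open>a\<^sup>*\<close>.\<close>
definition recip_abs :: "('b::frame) rfun \<Rightarrow> 'b rfun" where
  "recip_abs f =
    (\<lambda>r. if r < 0 then top else if r = 0 then pcompl (pcompl (cozero_of f))
         else inf (abs_lt f (1 / r)) (pcompl (pcompl (cozero_of f))),
     \<lambda>s. if s \<le> 0 then bot else sup (abs_gt f (1 / s)) (pcompl (cozero_of f)))"

context
  fixes f :: "('b::frame) rfun"
  assumes f: "f \<in> Cont"
begin

private abbreviation (input) "a \<equiv> cozero_of f"

private lemma rhom: "is_rhom f"
  by (rule Cont_rhom[OF f])

lemma recip_abs_simps:
  "fst (recip_abs f) r = (if r < 0 then top else if r = 0 then pcompl (pcompl a)
     else inf (abs_lt f (1 / r)) (pcompl (pcompl a)))"
  "snd (recip_abs f) s = (if s \<le> 0 then bot else sup (abs_gt f (1 / s)) (pcompl a))"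
  by (simp_all add: recip_abs_def)

lemma recip_abs_disjoint:
  assumes "s \<le> r" shows "inf (fst (recip_abs f) r) (snd (recip_abs f) s) = bot"
proof (cases "s \<le> 0")
  case False
  with assms have "0 < s" "0 < r" "1 / r \<le> 1 / s" by (auto simp: frac_le)
  have "inf (inf (abs_lt f (1 / r)) (pcompl (pcompl a))) (sup (abs_gt f (1 / s)) (pcompl a))
      \<le> sup (inf (abs_lt f (1 / r)) (abs_gt f (1 / s))) (inf (pcompl (pcompl a)) (pcompl a))"
    unfolding inf_sup_distrib1 by (intro sup_mono inf_mono) simp_all
  also have "\<dots> = bot" by (simp add: abs_lt_inf_abs_gt[OF rhom \<open>1 / r \<le> 1 / s\<close>] inf_pcompl_self)
  finally show ?thesis using \<open>0 < s\<close> \<open>0 < r\<close> by (simp add: recip_abs_simps bot_unique)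
qed (simp add: recip_abs_simps)

lemma recip_abs_fst_antimono:
  assumes "r \<le> s" shows "fst (recip_abs f) s \<le> fst (recip_abs f) r"
proof (cases "0 < r")
  case True
  with assms have "abs_lt f (1 / s) \<le> abs_lt f (1 / r)"
    by (intro abs_lt_mono[OF rhom]) (simp add: frac_le)
  with True assms show ?thesis by (simp add: recip_abs_simps le_infI1)
qed (use assms in \<open>auto simp: recip_abs_simps\<close>)

lemma recip_abs_snd_mono:
  assumes "r \<le> s" shows "snd (recip_abs f) r \<le> snd (recip_abs f) s"
proof (cases "0 < r")
  case True
  with assms have "abs_gt f (1 / r) \<le> abs_gt f (1 / s)"
    by (intro abs_gt_antimono[OF rhom]) (simp add: frac_le)
  with True assms show ?thesis by (simp add: recip_abs_simps le_supI1)
qed (simp add: recip_abs_simps)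

lemma recip_abs_fst_le_SUP: "fst (recip_abs f) r \<le> (SUP s\<in>{s. r < s}. fst (recip_abs f) s)"
proof (cases "0 \<le> r")
  case False
  then obtain s where "r < s" "s < 0" using dense by (metis not_le)
  then show ?thesis by (intro SUP_upper2[of s]) (simp_all add: recip_abs_simps)
next
  case True
  have tail: "inf (abs_lt f t) (pcompl (pcompl a)) \<le> (SUP s\<in>{s. r < s}. fst (recip_abs f) s)"
    if "r * t < 1" for t
  proof (cases "t \<le> 0")
    case False
    then have "r < 1 / t" using that by (simp add: field_simps)
    then show ?thesis using False True
      by (intro SUP_upper2[of "1 / t"]) (simp_all add: recip_abs_simps)
  qed (simp add: abs_lt_nonpos[OF rhom])
  show ?thesis
  proof (cases "r = 0")
    case True
    have "pcompl (pcompl a) = (SUP t. inf (abs_lt f t) (pcompl (pcompl a)))"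
      using SUP_abs_lt[OF f] frame_SUP_inf[of "abs_lt f" UNIV "pcompl (pcompl a)"] by simp
    also have "\<dots> \<le> (SUP s\<in>{s. r < s}. fst (recip_abs f) s)"
      using tail True by (intro SUP_least) simp
    finally show ?thesis using True by (simp add: recip_abs_simps)
  next
    case False
    with \<open>0 \<le> r\<close> have "0 < r" by simp
    have "fst (recip_abs f) r \<le> inf (SUP t\<in>{t. t < 1 / r}. abs_lt f t) (pcompl (pcompl a))"
      using \<open>0 < r\<close> abs_lt_le_SUP[OF rhom, of "1 / r"] by (simp add: recip_abs_simps le_infI1)
    also have "\<dots> = (SUP t\<in>{t. t < 1 / r}. inf (abs_lt f t) (pcompl (pcompl a)))"
      by (rule frame_SUP_inf)
    also have "\<dots> \<le> (SUP s\<in>{s. r < s}. fst (recip_abs f) s)"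
      using \<open>0 < r\<close> by (intro SUP_least tail) (simp add: field_simps)
    finally show ?thesis .
  qed
qed

lemma recip_abs_snd_le_SUP: "snd (recip_abs f) s \<le> (SUP r\<in>{r. r < s}. snd (recip_abs f) r)"
proof (cases "0 < s")
  case True
  have "abs_gt f (1 / s) \<le> (SUP t\<in>{t. 1 / s < t}. abs_gt f t)" by (rule abs_gt_le_SUP[OF rhom])
  also have "\<dots> \<le> (SUP r\<in>{r. r < s}. snd (recip_abs f) r)"
  proof (rule SUP_least)
    fix t assume "t \<in> {t. 1 / s < t}"
    then have "1 / s < t" by simp
    moreover from this True have "0 < t" by (metis less_trans zero_less_divide_1_iff)
    ultimately have "0 < t" "1 / t < s" using True by (simp_all add: field_simps)
    then show "abs_gt f t \<le> (SUP r\<in>{r. r < s}. snd (recip_abs f) r)"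
      by (intro SUP_upper2[of "1 / t"]) (simp_all add: recip_abs_simps)
  qed
  moreover have "pcompl a \<le> (SUP r\<in>{r. r < s}. snd (recip_abs f) r)"
    using True by (intro SUP_upper2[of "s / 2"]) (simp_all add: recip_abs_simps)
  ultimately show ?thesis using True by (simp add: recip_abs_simps)
qed (simp add: recip_abs_simps)

lemma is_rhom_recip_abs: "is_rhom (recip_abs f)"
  by (rule is_rhomI[OF recip_abs_disjoint recip_abs_fst_antimono recip_abs_snd_mono
        recip_abs_fst_le_SUP recip_abs_snd_le_SUP])

lemma recip_abs_Fbar: "recip_abs f \<in> Fbar"
proof (rule FbarI[OF is_rhom_recip_abs])
  fix r s :: rat assume "r < s"
  show "pcompl (fst (recip_abs f) r) \<le> snd (recip_abs f) s"
  proof (cases "0 < r")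
    case True
    with \<open>r < s\<close> have "0 < s" "1 / s < 1 / r" by (simp_all add: frac_less2)
    have "inf (pcompl (inf (abs_lt f (1 / r)) (pcompl (pcompl a)))) (abs_lt f (1 / r)) \<le> pcompl a"
      using inf_pcompl_inf_le by (metis pcompl_pcompl_pcompl)
    then have "pcompl (inf (abs_lt f (1 / r)) (pcompl (pcompl a)))
        \<le> sup (abs_gt f (1 / s)) (pcompl a)"
      by (rule le_sup_if_cover[OF abs_gt_sup_abs_lt[OF f \<open>1 / s < 1 / r\<close>] inf_le2])
    with True \<open>0 < s\<close> show ?thesis by (simp add: recip_abs_simps)
  qed (use \<open>r < s\<close> in \<open>auto simp: recip_abs_simps pcompl_top pcompl_pcompl_pcompl\<close>)
  show "pcompl (snd (recip_abs f) s) \<le> fst (recip_abs f) r"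
  proof (cases "0 \<le> r")
    case True
    with \<open>r < s\<close> have "0 < s" by simp
    have "pcompl (sup (abs_gt f (1 / s)) (pcompl a)) \<le> pcompl (pcompl a)"
      by (rule pcompl_antimono) simp
    moreover have "pcompl (sup (abs_gt f (1 / s)) (pcompl a)) \<le> abs_lt f (1 / r)" if "0 < r"
    proof -
      from that \<open>r < s\<close> have "1 / s < 1 / r" by (simp add: frac_less2)
      have "pcompl (sup (abs_gt f (1 / s)) (pcompl a)) \<le> pcompl (abs_gt f (1 / s))"
        by (rule pcompl_antimono) simp
      also have "\<dots> \<le> abs_lt f (1 / r)"
        by (rule pcompl_le_if_sup_eq_top[OF abs_gt_sup_abs_lt[OF f \<open>1 / s < 1 / r\<close>]])
      finally show ?thesis .
    qed
    ultimately show ?thesis using True \<open>0 < s\<close> by (auto simp: recip_abs_simps)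
  qed (simp add: recip_abs_simps)
qed

lemma SUP_snd_recip_abs: "(SUP s. snd (recip_abs f) s) = sup a (pcompl a)"
proof (rule order.antisym)
  show "(SUP s. snd (recip_abs f) s) \<le> sup a (pcompl a)"
  proof (rule SUP_least)
    fix s :: rat
    have "abs_gt f (1 / s) \<le> a" if "0 < s" using that by (simp add: abs_gt_le_cozero_of[OF rhom])
    then show "snd (recip_abs f) s \<le> sup a (pcompl a)" by (simp add: recip_abs_simps le_supI1)
  qed
  have "a \<le> (SUP t\<in>{t. 0 < t}. abs_gt f t)" by (rule cozero_of_le_SUP_abs_gt[OF rhom])
  also have "\<dots> \<le> (SUP s. snd (recip_abs f) s)"
  proof (rule SUP_least)
    fix t :: rat assume "t \<in> {t. 0 < t}"
    then show "abs_gt f t \<le> (SUP s. snd (recip_abs f) s)"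
      by (intro SUP_upper2[of "1 / t"]) (simp_all add: recip_abs_simps)
  qed
  finally have "a \<le> (SUP s. snd (recip_abs f) s)" .
  moreover have "pcompl a \<le> (SUP s. snd (recip_abs f) s)"
    by (rule SUP_upper2[of 1]) (simp_all add: recip_abs_simps)
  ultimately show "sup a (pcompl a) \<le> (SUP s. snd (recip_abs f) s)" by (rule sup_least)
qed

end

lemma Fr_if_extremally_disconnected:
  fixes f :: "('b::frame) rfun"
  assumes ed: "extremally_disconnected TYPE('b)" and f: "f \<in> Fbar"
    and dense: "pcompl (SUP r. fst f r) = bot" "pcompl (SUP s. snd f s) = bot"
  shows "f \<in> Fr"
proof (rule FrI[OF f])
  show "g = pinf" if "g \<in> Fbar" "Fbar_join_is f g pinf" for g
    using f dense(2) that max_compatible_if_extremally_disconnected[OF ed f \<open>g \<in> Fbar\<close>]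
    by (intro Fbar_join_is_pinf_imp_pinf[of f f]) (simp_all add: rle_def)
  have "pcompl (SUP s. snd (rneg f) s) = bot" using dense(1) by (simp add: SUP_uminus_rat)
  then show "g = pinf" if "g \<in> Fbar" "Fbar_join_is (rneg f) g pinf" for g
    using rneg_Fbar[OF f] that
      max_compatible_if_extremally_disconnected[OF ed rneg_Fbar[OF f] \<open>g \<in> Fbar\<close>]
    by (intro Fbar_join_is_pinf_imp_pinf[of "rneg f" "rneg f"]) (simp_all add: rle_def)
qed

text \<open>For a cozero element \<open>a\<close> of \<open>f\<close>, \<open>recip_abs f\<close> is in F; its continuity gives
  \<open>a \<or> a\<^sup>* = 1\<close>.\<close>
lemma P_frame_if_Fr_eq_Cont:
  assumes Fr_eq: "(Fr :: ('b::frame) rfun set) = Cont"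
  shows "P_frame TYPE('b)"
  unfolding P_frame_def is_cozero_def
proof (intro allI impI)
  fix a :: 'b assume "\<exists>f\<in>Cont. a = sup (snd f 0) (fst f 0)"
  then obtain f where f: "f \<in> Cont" and a: "a = cozero_of f" unfolding cozero_of_def by blast
  have "pcompl (SUP r. fst (recip_abs f) r) = bot"
    using SUP_upper[of "-1" UNIV "fst (recip_abs f)"]
    by (simp add: recip_abs_simps[OF f] top_unique pcompl_top)
  then have "recip_abs f \<in> Fr"
    by (intro Fr_if_extremally_disconnected[OF extremally_disconnected_if_Fr_eq_Cont[OF Fr_eq]]
        recip_abs_Fbar[OF f]) (simp_all add: SUP_snd_recip_abs[OF f] pcompl_sup_pcompl)
  then have "(SUP s. snd (recip_abs f) s) = top" using Fr_eq Cont_SUP_snd by blast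
  then have "sup a (pcompl a) = top" using SUP_snd_recip_abs[OF f] a by simp
  then show "\<exists>b. inf a b = bot \<and> sup a b = top" using inf_self_pcompl by blast
qed

section \<open>Cozero elements\<close>

definition shrink :: "rat \<Rightarrow> rat" where
  "shrink x = 1 + x / (1 + \<bar>x\<bar>)"

lemma shrink_bounds: "0 < shrink x" "shrink x < 2"
proof -
  have "\<bar>x / (1 + \<bar>x\<bar>)\<bar> < 1" by (simp flip: abs_div_pos add: add_pos_nonneg)
  then show "0 < shrink x" "shrink x < 2" unfolding shrink_def by linarith+
qed

lemma strict_mono_shrink: "strict_mono shrink"
proof (rule strict_monoI)
  fix x y :: rat assume "x < y"
  have "x / (1 + \<bar>x\<bar>) < y / (1 + \<bar>y\<bar>)"
  proof -
    have "0 < 1 + \<bar>x\<bar>" "0 < 1 + \<bar>y\<bar>" by (simp_all add: add_pos_nonneg)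
    moreover have "x * (1 + \<bar>y\<bar>) < y * (1 + \<bar>x\<bar>)"
    proof (cases "x < 0 \<and> 0 \<le> y")
      case True
      then have "x * (1 + \<bar>y\<bar>) < 0" "0 \<le> y * (1 + \<bar>x\<bar>)"
        by (simp_all add: mult_neg_pos)
      then show ?thesis by linarith
    qed (use \<open>x < y\<close> in \<open>auto simp: abs_if algebra_simps\<close>)
    ultimately show ?thesis by (simp add: field_simps)
  qed
  then show "shrink x < shrink y" by (simp add: shrink_def)
qed

lemma shrink_surj:
  assumes "0 < u" "u < 2" shows "\<exists>x. shrink x = u"
proof
  define v d where "v = u - 1" and "d = 1 - \<bar>v\<bar>"
  have d: "0 < d" using assms unfolding v_def d_def by simp
  have "1 + \<bar>v / d\<bar> = (d + \<bar>v\<bar>) / d" using d by (simp add: abs_div_pos[symmetric] field_simps)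
  also have "\<dots> = 1 / d" by (simp add: d_def)
  finally have "v / d / (1 + \<bar>v / d\<bar>) = v" using d by simp
  then show "shrink (v / d) = u" unfolding shrink_def v_def by simp
qed

text \<open>\<open>shrink \<circ> f\<close>: composing with the order embedding \<open>shrink\<close> of \<open>\<rat>\<close> into \<open>(0, 2)\<close>
  turns a partial function satisfying (r2) into a continuous one with values in \<open>[0, 2]\<close>.\<close>
definition squash :: "('b::complete_lattice) rfun \<Rightarrow> 'b rfun" where
  "squash f = (\<lambda>r. if r < 0 then top else (SUP x\<in>{x. r < shrink x}. fst f x),
               \<lambda>s. if 2 < s then top else (SUP y\<in>{y. shrink y < s}. snd f y))"

lemma squash_simps:
  "fst (squash f) r = (if r < 0 then top else (SUP x\<in>{x. r < shrink x}. fst f x))"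
  "snd (squash f) s = (if 2 < s then top else (SUP y\<in>{y. shrink y < s}. snd f y))"
  by (simp_all add: squash_def)

lemma squash_disjoint:
  assumes f: "is_rhom (f::('b::frame) rfun)" and "s \<le> r"
  shows "inf (fst (squash f) r) (snd (squash f) s) = bot"
proof -
  have "inf (fst f x) (snd f y) = bot" if "r < shrink x" "shrink y < s" for x y
    using that \<open>s \<le> r\<close> strict_mono_less[OF strict_mono_shrink, of y x]
    by (intro rhom_disjoint[OF f]) simp
  moreover have "\<not> shrink y < s" if "r < 0" for y
    using that \<open>s \<le> r\<close> shrink_bounds(1)[of y] by linarith
  moreover have "\<not> r < shrink x" if "2 < s" for x
    using that \<open>s \<le> r\<close> shrink_bounds(2)[of x] by linarith
  ultimately show ?thesis using \<open>s \<le> r\<close> by (auto simp: squash_simps frame_SUP_inf_SUP)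
qed

lemma squash_fst_le_SUP: "fst (squash f) r \<le> (SUP s\<in>{s. r < s}. fst (squash f) s)"
proof (cases "r < 0")
  case True
  then have "r < r / 2" "r / 2 < 0" by simp_all
  then show ?thesis by (intro SUP_upper2[of "r / 2"]) (simp_all add: squash_simps)
next
  case False
  have "fst f x \<le> (SUP s\<in>{s. r < s}. fst (squash f) s)" if "r < shrink x" for x
  proof -
    obtain s where "r < s" "s < shrink x" using dense \<open>r < shrink x\<close> by blast
    with False show ?thesis by (intro SUP_upper2[of s]) (auto simp: squash_simps intro: SUP_upper)
  qed
  then have "(SUP x\<in>{x. r < shrink x}. fst f x) \<le> (SUP s\<in>{s. r < s}. fst (squash f) s)"
    by (intro SUP_least) simp
  moreover have "fst (squash f) r = (SUP x\<in>{x. r < shrink x}. fst f x)"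
    using False by (simp add: squash_simps)
  ultimately show ?thesis by simp
qed

lemma squash_snd_le_SUP: "snd (squash f) s \<le> (SUP r\<in>{r. r < s}. snd (squash f) r)"
proof (cases "2 < s")
  case True
  then obtain r where "2 < r" "r < s" using dense by blast
  then show ?thesis by (intro SUP_upper2[of r]) (simp_all add: squash_simps)
next
  case False
  have "snd f y \<le> (SUP r\<in>{r. r < s}. snd (squash f) r)" if "shrink y < s" for y
  proof -
    obtain r where "shrink y < r" "r < s" using dense \<open>shrink y < s\<close> by blast
    with False show ?thesis by (intro SUP_upper2[of r]) (auto simp: squash_simps intro: SUP_upper)
  qed
  then have "(SUP y\<in>{y. shrink y < s}. snd f y) \<le> (SUP r\<in>{r. r < s}. snd (squash f) r)"
    by (intro SUP_least) simp
  moreover have "snd (squash f) s = (SUP y\<in>{y. shrink y < s}. snd f y)"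
    using False by (simp add: squash_simps)
  ultimately show ?thesis by simp
qed

lemma is_rhom_squash: "is_rhom (f::('b::frame) rfun) \<Longrightarrow> is_rhom (squash f)"
  by (rule is_rhomI[OF squash_disjoint _ _ squash_fst_le_SUP squash_snd_le_SUP])
    (auto simp: squash_simps intro!: SUP_subset_mono)

lemma squash_Cont:
  assumes f: "is_rhom (f::('b::frame) rfun)"
    and cover: "\<And>r s. r < s \<Longrightarrow> sup (fst f r) (snd f s) = top"
  shows "squash f \<in> Cont"
proof (rule ContI[OF is_rhom_squash[OF f]])
  fix r s :: rat assume "r < s"
  show "sup (fst (squash f) r) (snd (squash f) s) = top"
  proof (cases "r < 0 \<or> 2 < s")
    case False
    obtain u where "r < u" "u < s" using dense \<open>r < s\<close> by blast
    obtain v where "u < v" "v < s" using dense \<open>u < s\<close> by blast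
    with False \<open>r < u\<close> obtain x y where x: "shrink x = u" and y: "shrink y = v"
      using shrink_surj[of u] shrink_surj[of v] by force
    with \<open>u < v\<close> have "x < y" using strict_mono_less[OF strict_mono_shrink] by blast
    then have "top = sup (fst f x) (snd f y)" using cover by simp
    also have "\<dots> \<le> sup (fst (squash f) r) (snd (squash f) s)"
      using False x y \<open>r < u\<close> \<open>v < s\<close> by (intro sup_mono) (auto simp: squash_simps intro: SUP_upper)
    finally show ?thesis by (rule top_unique[THEN iffD1])
  qed (auto simp: squash_simps)
next
  show "(SUP r. fst (squash f) r) = top"
    by (rule top_unique[THEN iffD1], rule SUP_upper2[of "-1"]) (simp_all add: squash_simps)
  show "(SUP s. snd (squash f) s) = top"
    by (rule top_unique[THEN iffD1], rule SUP_upper2[of 3]) (simp_all add: squash_simps)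
qed

lemma is_cozero_SUP_fst:
  assumes "is_rhom (f::('b::frame) rfun)" "\<And>r s. r < s \<Longrightarrow> sup (fst f r) (snd f s) = top"
  shows "is_cozero (SUP r. fst f r)"
  unfolding is_cozero_def
proof
  have "{y. shrink y < 0} = {}" "{x. 0 < shrink x} = UNIV"
    using shrink_bounds(1) by (auto simp: not_less_iff_gr_or_eq)
  then show "(SUP r. fst f r) = sup (snd (squash f) 0) (fst (squash f) 0)"
    by (simp add: squash_simps)
qed (rule squash_Cont[OF assms])

section \<open>Extremally disconnected P-frames\<close>

lemma Fbar_cover_if_extremally_disconnected:
  assumes ed: "extremally_disconnected TYPE('b::frame)" and f: "(f::'b rfun) \<in> Fbar" and "r < s"
  shows "sup (fst f r) (snd f s) = top"
proof -
  obtain t where rt: "r < t" and ts: "t < s" using dense \<open>r < s\<close> by blast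
  obtain r' where rr': "r < r'" and r't: "r' < t" using dense rt by blast
  have "snd f r' \<le> pcompl (fst f t)"
    using rhom_disjoint[OF Fbar_rhom[OF f], of r' t] r't by (simp add: le_pcompl_iff inf_commute)
  then have "pcompl (pcompl (fst f t)) \<le> pcompl (snd f r')" by (rule pcompl_antimono)
  also have "\<dots> \<le> fst f r" by (rule Fbar_pcompl_snd_le[OF f rr'])
  finally have "pcompl (pcompl (fst f t)) \<le> fst f r" .
  moreover have "pcompl (fst f t) \<le> snd f s" by (rule Fbar_pcompl_fst_le[OF f ts])
  ultimately have "sup (pcompl (fst f t)) (pcompl (pcompl (fst f t))) \<le> sup (fst f r) (snd f s)"
    by (simp add: le_supI1 le_supI2)
  then show ?thesis by (simp add: extremally_disconnectedD[OF ed] top_unique)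
qed

text \<open>\<open>+\<infinity>\<close> on \<open>x\<close> and \<open>-\<infinity>\<close> on \<open>y\<close>.\<close>
definition pm_infty :: "'b \<Rightarrow> 'b \<Rightarrow> 'b rfun" where
  "pm_infty x y = (\<lambda>_. x, \<lambda>_. y)"

lemma pm_infty_Fbar:
  assumes "inf x y = (bot::'b::frame)" "sup x y = top"
  shows "pm_infty x y \<in> Fbar"
proof (rule FbarI)
  have "{s. r < s} \<noteq> {}" "{r. r < s} \<noteq> {}" for r s :: rat
    using lt_ex gt_ex by blast+
  then show "is_rhom (pm_infty x y)" using assms(1) by (simp add: is_rhom_def pm_infty_def)
qed (use assms(2) in \<open>simp_all add: pm_infty_def pcompl_le_if_sup_eq_top sup_commute\<close>)

lemma minf_Fbar: "(minf::('b::frame) rfun) \<in> Fbar"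
  using pm_infty_Fbar[of "bot::'b" top] by (simp add: pm_infty_def minf_def)

lemma Fbar_meet_is_rneg:
  assumes "Fbar_join_is f g h" shows "Fbar_meet_is (rneg f) (rneg g) (rneg h)"
  unfolding Fbar_meet_is_def
proof (intro conjI ballI impI)
  show "rneg h \<in> Fbar" "rle (rneg h) (rneg f)" "rle (rneg h) (rneg g)"
    using assms by (simp_all add: Fbar_join_is_def rneg_Fbar)
  fix k assume "k \<in> Fbar" "rle k (rneg f) \<and> rle k (rneg g)"
  then have "rneg k \<in> Fbar" "rle f (rneg k)" "rle g (rneg k)"
    by (simp_all add: rneg_Fbar rle_rneg_right)
  then have "rle h (rneg k)" using assms unfolding Fbar_join_is_def by blast
  then show "rle k (rneg h)" by (simp add: rle_rneg_right)
qed

lemma rneg_Fr: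
  fixes f :: "('b::frame) rfun"
  assumes f: "f \<in> Fr" shows "rneg f \<in> Fr"
proof (rule FrI[OF rneg_Fbar[OF Fr_Fbar[OF f]]])
  fix g :: "'b rfun" assume g: "g \<in> Fbar"
  show "g = pinf" if "Fbar_join_is (rneg f) g pinf"
  proof -
    have "Fbar_meet_is f (rneg g) minf" using Fbar_meet_is_rneg[OF that] by simp
    then have "rneg g = minf" by (rule Fr_meet_minf[OF f rneg_Fbar[OF g]])
    then show ?thesis by (metis rneg_simps(3,4))
  qed
  show "g = pinf" if "Fbar_join_is (rneg (rneg f)) g pinf"
    using that Fr_join_pinf[OF f g] by simp
qed

text \<open>If \<open>e = \<Squnion>\<^sub>r f(r,\<midarrow>)\<close> has a complement \<open>b\<close>, then \<open>f \<and> pm_infty b e = -\<infinity>\<close>,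
  so \<open>b = 0\<close>.\<close>
lemma Fr_SUP_fst_eq_top:
  fixes f :: "('b::frame) rfun"
  assumes f: "f \<in> Fr" and b: "inf (SUP r. fst f r) b = bot" "sup (SUP r. fst f r) b = top"
  shows "(SUP r. fst f r) = top"
proof -
  let ?e = "SUP r. fst f r"
  have g: "pm_infty b ?e \<in> Fbar" using b by (intro pm_infty_Fbar) (simp_all add: ac_simps)
  have "Fbar_meet_is f (pm_infty b ?e) minf"
    unfolding Fbar_meet_is_def
  proof (intro conjI ballI impI minf_Fbar)
    show "rle minf f" "rle minf (pm_infty b ?e)" by (simp_all add: rle_def minf_def)
    fix k assume k: "k \<in> Fbar" "rle k f \<and> rle k (pm_infty b ?e)"
    have "fst k r \<le> inf ?e b" for r
    proof (rule le_infI)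
      have "fst k r \<le> fst f r" using k(2) by (simp add: rle_def)
      also have "\<dots> \<le> ?e" by (rule SUP_upper) simp
      finally show "fst k r \<le> ?e" .
      show "fst k r \<le> b" using k(2) by (simp add: rle_def pm_infty_def)
    qed
    then have "k = minf"
      using b(1) by (intro Fbar_eq_minf_if_fst_bot[OF k(1)]) (simp add: bot_unique)
    then show "rle k minf" by (simp add: rle_def)
  qed
  then have "pm_infty b ?e = minf" by (rule Fr_meet_minf[OF f g])
  then have "b = bot" by (simp add: pm_infty_def minf_def fun_eq_iff)
  then show ?thesis using b(2) by simp
qed

lemma Fr_subset_Cont:
  assumes ed: "extremally_disconnected TYPE('b::frame)" and P: "P_frame TYPE('b)"
  shows "(Fr :: 'b rfun set) \<subseteq> Cont"
proof
  have SUP_fst: "(SUP r. fst f r) = top" if "f \<in> Fr" for f :: "'b rfun"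
  proof -
    have "is_cozero (SUP r. fst f r)"
      using Fr_Fbar[OF that] Fbar_cover_if_extremally_disconnected[OF ed]
      by (intro is_cozero_SUP_fst Fbar_rhom)
    then obtain b where "inf (SUP r. fst f r) b = bot" "sup (SUP r. fst f r) b = top"
      using P unfolding P_frame_def by blast
    then show ?thesis by (rule Fr_SUP_fst_eq_top[OF that])
  qed
  fix f :: "'b rfun" assume f: "f \<in> Fr"
  show "f \<in> Cont"
  proof (rule ContI[OF Fbar_rhom[OF Fr_Fbar[OF f]]])
    show "r < s \<Longrightarrow> sup (fst f r) (snd f s) = top" for r s
      by (rule Fbar_cover_if_extremally_disconnected[OF ed Fr_Fbar[OF f]])
    show "(SUP r. fst f r) = top" by (rule SUP_fst[OF f])
    show "(SUP s. snd f s) = top" using SUP_fst[OF rneg_Fr[OF f]] by (simp add: SUP_uminus_rat)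
  qed
qed

theorem Fr_eq_Cont_iff:
  "(Fr :: ('b::frame) rfun set) = Cont \<longleftrightarrow> extremally_disconnected TYPE('b) \<and> P_frame TYPE('b)"
proof
  assume "(Fr :: 'b rfun set) = Cont"
  then show "extremally_disconnected TYPE('b) \<and> P_frame TYPE('b)"
    by (simp add: extremally_disconnected_if_Fr_eq_Cont P_frame_if_Fr_eq_Cont)
next
  assume "extremally_disconnected TYPE('b) \<and> P_frame TYPE('b)"
  then show "(Fr :: 'b rfun set) = Cont" by (simp add: order.antisym Fr_subset_Cont Cont_subset_Fr)
qed

section \<open>Sublocales\<close>

lemma le_fimp_iff: "(y::'a::frame) \<le> fimp x s \<longleftrightarrow> inf y x \<le> s"
proof
  have "inf (fimp x s) x = (SUP z\<in>{z. inf z x \<le> s}. inf z x)"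
    unfolding fimp_def using frame_SUP_inf[of "\<lambda>z. z" _ x] by simp
  also have "\<dots> \<le> s" by (auto intro: SUP_least)
  finally show "y \<le> fimp x s \<Longrightarrow> inf y x \<le> s" by (meson inf_mono order_refl order_trans)
qed (auto simp: fimp_def intro: Sup_upper)

lemma inf_fimp_le: "inf (fimp x s) (x::'a::frame) \<le> s"
  using le_fimp_iff by blast

lemma fimp_inf: "fimp (x::'a::frame) (inf s t) = inf (fimp x s) (fimp x t)"
proof (rule order.antisym)
  show "fimp x (inf s t) \<le> inf (fimp x s) (fimp x t)"
    using inf_fimp_le[of x "inf s t"] by (simp add: le_fimp_iff)
  show "inf (fimp x s) (fimp x t) \<le> fimp x (inf s t)"
  proof -
    have "inf (inf (fimp x s) (fimp x t)) x \<le> inf (inf (fimp x s) x) (inf (fimp x t) x)"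
      by (intro le_infI inf_mono) simp_all
    also have "\<dots> \<le> inf s t" by (intro inf_mono inf_fimp_le)
    finally show ?thesis by (simp add: le_fimp_iff)
  qed
qed

lemma fimp_eq_top: "x \<le> (s::'a::frame) \<Longrightarrow> fimp x s = top"
  by (simp add: top_unique[symmetric] le_fimp_iff le_infI2)

lemma inf_fimp_eq: "z \<le> (x::'a::frame) \<Longrightarrow> inf x (fimp x z) = z"
  using inf_fimp_le[of x z] by (intro order.antisym) (simp_all add: le_fimp_iff inf_commute)

lemma sublocale_Inf: "is_sublocale S \<Longrightarrow> A \<subseteq> S \<Longrightarrow> Inf A \<in> S"
  by (simp add: is_sublocale_def)

lemma sublocale_fimp: "is_sublocale S \<Longrightarrow> s \<in> S \<Longrightarrow> fimp x s \<in> S"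
  by (simp add: is_sublocale_def)

lemma sublocale_top: "is_sublocale S \<Longrightarrow> top \<in> S"
  using sublocale_Inf[of S "{}"] by simp

lemma sublocale_inf: "is_sublocale S \<Longrightarrow> s \<in> S \<Longrightarrow> t \<in> S \<Longrightarrow> inf s t \<in> S"
  using sublocale_Inf[of S "{s, t}"] by simp

definition meets :: "'a::lattice set \<Rightarrow> 'a set \<Rightarrow> 'a set" where
  "meets S T = {inf s t |s t. s \<in> S \<and> t \<in> T}"

lemma sublocale_meets:
  assumes S: "is_sublocale (S::'a::frame set)" and T: "is_sublocale T"
  shows "is_sublocale (meets S T)"
  unfolding is_sublocale_def
proof (intro conjI allI impI ballI)
  fix A assume "A \<subseteq> meets S T"
  then have "\<forall>z\<in>A. \<exists>p. fst p \<in> S \<and> snd p \<in> T \<and> z = inf (fst p) (snd p)"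
    unfolding meets_def by fastforce
  then obtain p
    where p: "\<And>z. z \<in> A \<Longrightarrow> fst (p z) \<in> S \<and> snd (p z) \<in> T \<and> z = inf (fst (p z)) (snd (p z))"
    by metis
  have "Inf A = (INF z\<in>A. inf (fst (p z)) (snd (p z)))"
    by (rule arg_cong[where f = Inf]) (use p in force)
  then have "Inf A = inf (INF z\<in>A. fst (p z)) (INF z\<in>A. snd (p z))"
    by (simp add: INF_inf_distrib)
  moreover have "(INF z\<in>A. fst (p z)) \<in> S" "(INF z\<in>A. snd (p z)) \<in> T"
    using p by (auto intro!: sublocale_Inf[OF S] sublocale_Inf[OF T])
  ultimately show "Inf A \<in> meets S T" unfolding meets_def by blast
next
  fix x z assume "z \<in> meets S T"
  then obtain s t where "s \<in> S" "t \<in> T" "z = inf s t" unfolding meets_def by blast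
  then have "fimp x z = inf (fimp x s) (fimp x t)" "fimp x s \<in> S" "fimp x t \<in> T"
    using sublocale_fimp[OF S] sublocale_fimp[OF T] by (auto simp: fimp_inf)
  then show "fimp x z \<in> meets S T" unfolding meets_def by blast
qed

lemma sl_hull_Un_eq_meets:
  assumes S: "is_sublocale (S::'a::frame set)" and T: "is_sublocale T"
  shows "sl_hull (S \<union> T) = meets S T"
proof
  have "inf s t \<in> meets S T" if "s \<in> S" "t \<in> T" for s t
    using that unfolding meets_def by blast
  then have "S \<union> T \<subseteq> meets S T"
    using sublocale_top[OF S] sublocale_top[OF T]
    by (metis UnE inf_top.right_neutral inf_top_left subsetI)
  then show "sl_hull (S \<union> T) \<subseteq> meets S T" by (rule hull_least[OF sublocale_meets[OF S T]])
  show "meets S T \<subseteq> sl_hull (S \<union> T)"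
    unfolding meets_def using hull_sub[of "S \<union> T"] sublocale_inf[OF is_sublocale_hull] by blast
qed

lemma Rep_coS_Sup: "Rep_coS (Sup A) = \<Inter>(Rep_coS ` A)"
  by (simp add: Sup_coS_def Rep_Abs_Inter)

lemma Rep_coS_inf: "Rep_coS (inf S T) = meets (Rep_coS S) (Rep_coS T)"
  unfolding inf_coS_def Rep_Abs_hull by (simp add: sl_hull_Un_eq_meets Rep_coS_sl)

text \<open>An element \<open>z\<close> of every \<open>inf X a\<close> (\<open>a \<in> A\<close>) equals \<open>x \<and> (x \<rightarrow> z)\<close>, where
  \<open>x \<in> X\<close> is the meet of its \<open>X\<close>-components, and \<open>x \<rightarrow> z\<close> lies in every \<open>a\<close>.\<close>
instance coS :: (frame) frame
proof
  fix X :: "'a coS" and A :: "'a coS set"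
  show "inf X (Sup A) = (SUP a\<in>A. inf X a)"
  proof (rule order.antisym)
    show "(SUP a\<in>A. inf X a) \<le> inf X (Sup A)"
      by (intro SUP_least inf_mono order_refl Sup_upper)
    show "inf X (Sup A) \<le> (SUP a\<in>A. inf X a)"
      unfolding less_eq_coS_def
    proof
      fix z assume "z \<in> Rep_coS (SUP a\<in>A. inf X a)"
      then have "\<forall>a\<in>A. \<exists>p. fst p \<in> Rep_coS X \<and> snd p \<in> Rep_coS a \<and> z = inf (fst p) (snd p)"
        unfolding Rep_coS_Sup by (simp add: Rep_coS_inf meets_def) metis
      then obtain p where p: "\<And>a. a \<in> A \<Longrightarrow>
          fst (p a) \<in> Rep_coS X \<and> snd (p a) \<in> Rep_coS a \<and> z = inf (fst (p a)) (snd (p a))"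
        by metis
      define x where "x = (INF a\<in>A. fst (p a))"
      have "x \<in> Rep_coS X"
        unfolding x_def using p by (intro sublocale_Inf[OF Rep_coS_sl]) blast
      moreover have "fimp x z \<in> Rep_coS a" if "a \<in> A" for a
      proof -
        have "x \<le> fst (p a)" unfolding x_def using that by (rule INF_lower)
        then have "fimp x z = fimp x (snd (p a))"
          using p[OF that] by (simp add: fimp_inf fimp_eq_top)
        then show ?thesis using sublocale_fimp[OF Rep_coS_sl, of "snd (p a)" a x] p[OF that] by simp
      qed
      moreover have "z = inf x (fimp x z)"
        unfolding x_def using p by (intro inf_fimp_eq[symmetric] INF_greatest) simp
      ultimately show "z \<in> Rep_coS (inf X (Sup A))"
        unfolding Rep_coS_inf Rep_coS_Sup meets_def by blast
    qed
  qed
qed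

theorem proposition6p3:
  shows "(Fr :: ('a::frame coS) rfun set) = Cont \<longleftrightarrow>
    extremally_disconnected TYPE('a coS) \<and> P_frame TYPE('a coS)"
  by (rule Fr_eq_Cont_iff)

end
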